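(* For a real parameter $g$, let $H^{(7)}(g)$ be the $7\times7$ real matrix with diagonal $(1,3,5,7,9,11,13)$, entries $H_{1,3}=\sqrt3 g$, $H_{2,4}=\sqrt2 g$, $H_{3,5}=2g$, $H_{4,6}=\sqrt2 g$, $H_{5,7}=\sqrt3 g$, entries $H_{n+2,n}=-H_{n,n+2}$ for $n=1,\dots,5$, and all other entries zero. Then the eigenvalues of $H^{(7)}(g)$ are $$E_m(g)=7+m\sqrt{4-g^2},\qquad m\in\{-3,-2,-1,0,1,2,3\}.$$ In particular, for $0\le g<2$ all seven eigenvalues are real and pairwise distinct, while at $g=2$ all of them coincide at $\eta=7$ and $H^{(7)}(2)$ is not diagonalizable: its Jordan form consists of two Jordan blocks for the eigenvalue $7$, of sizes $4$ and $3$ (geometric multiplicity $2$). *)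

theory Defs
  imports "Jordan_Normal_Form.Jordan_Normal_Form_Uniqueness"
begin

text \<open>The 7x7 matrix H^(7)(g), 0-indexed: entry (i,j) here is the paper's entry (i+1,j+1).\<close>
definition Hsup :: "real \<Rightarrow> nat \<Rightarrow> real" where
  "Hsup g i = (if i = 0 then sqrt 3 * g else if i = 1 then sqrt 2 * g else if i = 2 then 2 * g
      else if i = 3 then sqrt 2 * g else if i = 4 then sqrt 3 * g else 0)"

definition H7 :: "real \<Rightarrow> real mat" where
  "H7 g = mat 7 7 (\<lambda>(i,j). if i = j then 2 * real i + 1
      else if j = i + 2 then Hsup g i
      else if i = j + 2 then - Hsup g j
      else 0)"

text \<open>Paper's eigenvalue formula, as complex numbers (complex square root for g > 2).\<close>
definition Eig :: "real \<Rightarrow> int \<Rightarrow> complex" where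
  "Eig g m = 7 + of_int m * csqrt (complex_of_real (4 - g^2))"

definition diagonalizable_mat :: "'a :: semiring_1 mat \<Rightarrow> bool" where
  "diagonalizable_mat A = (\<exists>D. similar_mat A D \<and> diagonal_mat D)"

end

theory Submission
  imports Defs
begin

text \<open>
  \<open>H7 g\<close> only couples the basis vectors \<open>n\<close> and \<open>n + 2\<close>, so reordering the basis as
  \<open>0, 2, 4, 6, 1, 3, 5\<close> makes it block diagonal, with a 4\<times>4 block on the even and a 3\<times>3 block
  on the odd vectors. Both blocks are tridiagonal; their characteristic polynomials are
  \<open>((x-7)\<^sup>2 - 9s\<^sup>2)((x-7)\<^sup>2 - s\<^sup>2)\<close> and \<open>(x-7)((x-7)\<^sup>2 - 4s\<^sup>2)\<close> with \<open>s\<^sup>2 = 4 - g\<^sup>2\<close>, whose roots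
  are the \<open>7 + ms\<close>. At \<open>g = 2\<close> each block has the single eigenvalue 7 and is a single Jordan
  block, as an explicit Jordan chain shows. A diagonalizable matrix with a single eigenvalue
  \<open>a\<close> is \<open>a\<close> times the identity, which \<open>H7 2\<close> is not.
\<close>

lemma det_mat_Suc:
  "det (mat (Suc n) (Suc n) f :: 'a::comm_ring_1 mat) =
   (\<Sum>j<Suc n. f (0, j) * (-1)^j * det (mat n n (\<lambda>(a, b). f (Suc a, if b < j then b else Suc b))))"
proof -
  let ?A = "mat (Suc n) (Suc n) f"
  have "det ?A = (\<Sum>j<Suc n. ?A $$ (0, j) * cofactor ?A 0 j)"
    by (rule laplace_expansion_row) auto
  also have "\<dots> = (\<Sum>j<Suc n. f (0, j) * (-1)^j * det (mat n n (\<lambda>(a, b). f (Suc a, if b < j then b else Suc b))))"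
  proof (rule sum.cong[OF refl])
    fix j assume j: "j \<in> {..<Suc n}"
    have "mat_delete ?A 0 j = mat n n (\<lambda>(a, b). f (Suc a, if b < j then b else Suc b))"
      unfolding mat_delete_def by (rule cong_mat) auto
    then show "?A $$ (0, j) * cofactor ?A 0 j = f (0, j) * (-1)^j * det (mat n n (\<lambda>(a, b). f (Suc a, if b < j then b else Suc b)))"
      using j unfolding cofactor_def by simp
  qed
  finally show ?thesis .
qed

lemma poly_char_poly_mat:
  "poly (char_poly (mat n n f :: 'a::field mat)) x = det (mat n n (\<lambda>(i, j). (if i = j then x else 0) - f (i, j)))"
  by (subst char_poly_matrix[of _ n]) (auto intro!: arg_cong[where f = det] eq_matI simp: char_matrix_def)

lemma char_poly_four_block_mat_0_0:
  assumes A: "A \<in> carrier_mat n n" and B: "B \<in> carrier_mat m m"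
  shows "char_poly (four_block_mat A (0\<^sub>m n m) (0\<^sub>m m n) B) = char_poly A * char_poly (B :: 'a::idom mat)"
proof -
  let ?cm = "\<lambda>A. [:0, 1:] \<cdot>\<^sub>m 1\<^sub>m (dim_row A) + map_mat (\<lambda>a. [:- a:]) A"
  have "?cm (four_block_mat A (0\<^sub>m n m) (0\<^sub>m m n) B) = four_block_mat (?cm A) (0\<^sub>m n m) (0\<^sub>m m n) (?cm B)"
    using A B by (intro eq_matI) (auto simp: one_poly_def)
  moreover have "det (four_block_mat (?cm A) (0\<^sub>m n m) (0\<^sub>m m n) (?cm B)) = det (?cm A) * det (?cm B)"
    using A B by (intro det_four_block_mat_lower_left_zero) auto
  ultimately show ?thesis
    unfolding char_poly_defs by simp
qed

lemma similar_mat_reindex: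
  fixes A B :: "'a::field mat"
  assumes A: "A \<in> carrier_mat n n" and B: "B \<in> carrier_mat n n"
    and p: "\<And>i. i < n \<Longrightarrow> p i < n" and inj: "inj_on p {..<n}"
    and entries: "\<And>i j. i < n \<Longrightarrow> j < n \<Longrightarrow> A $$ (i, j) = B $$ (p i, p j)"
  shows "similar_mat A B"
proof -
  define P :: "'a mat" where "P = mat n n (\<lambda>(i, k). if k = p i then 1 else 0)"
  define Q :: "'a mat" where "Q = mat n n (\<lambda>(k, j). if k = p j then 1 else 0)"
  have P: "P \<in> carrier_mat n n" and Q: "Q \<in> carrier_mat n n" unfolding P_def Q_def by auto
  have PQ: "P * Q = 1\<^sub>m n"
  proof (rule eq_matI)
    fix i j assume i: "i < dim_row (1\<^sub>m n)" and j: "j < dim_col (1\<^sub>m n)"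
    have "(P * Q) $$ (i, j) = (\<Sum>k\<in>{0..<n}. (if k = p i then 1 else 0) * (if k = p j then 1 else 0))"
      using i j by (simp add: P_def Q_def scalar_prod_def)
    also have "\<dots> = (if p i = p j then 1 else 0)"
      using p[of i] p[of j] i j by (simp add: if_distrib[of "\<lambda>x. x * _"] sum.delta cong: if_cong)
    also have "\<dots> = 1\<^sub>m n $$ (i, j)" using inj i j by (auto dest: inj_onD)
    finally show "(P * Q) $$ (i, j) = 1\<^sub>m n $$ (i, j)" .
  qed (auto simp: P_def Q_def)
  have QP: "Q * P = 1\<^sub>m n" by (rule mat_mult_left_right_inverse[OF P Q PQ])
  have BQ: "(B * Q) $$ (k, j) = B $$ (k, p j)" if "k < n" "j < n" for k j
  proof -
    have "(B * Q) $$ (k, j) = (\<Sum>l\<in>{0..<n}. B $$ (k, l) * (if l = p j then 1 else 0))"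
      using that B by (simp add: Q_def scalar_prod_def)
    also have "\<dots> = B $$ (k, p j)"
      using p[of j] that by (simp add: if_distrib[of "\<lambda>x. _ * x"] sum.delta cong: if_cong)
    finally show ?thesis .
  qed
  have "A = P * (B * Q)"
  proof (rule eq_matI)
    fix i j assume i: "i < dim_row (P * (B * Q))" and j: "j < dim_col (P * (B * Q))"
    then have i': "i < n" and j': "j < n" using B by (auto simp: P_def Q_def)
    have "(P * (B * Q)) $$ (i, j) = (\<Sum>k\<in>{0..<n}. (if k = p i then 1 else 0) * (B * Q) $$ (k, j))"
      using i' j' B by (simp add: P_def Q_def scalar_prod_def)
    also have "\<dots> = (B * Q) $$ (p i, j)"
      using p[of i] i' by (simp add: if_distrib[of "\<lambda>x. x * _"] sum.delta cong: if_cong)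
    also have "\<dots> = A $$ (i, j)" using BQ p i' j' entries by auto
    finally show "A $$ (i, j) = (P * (B * Q)) $$ (i, j)" by simp
  qed (use A B in \<open>auto simp: P_def Q_def\<close>)
  then have "A = P * B * Q" using P Q B by (simp add: assoc_mult_mat[of P n n B n Q n])
  then show ?thesis
    unfolding similar_mat_def using similar_mat_witI[OF PQ QP _ A B P Q] by blast
qed

lemma similar_mat_intertwining:
  fixes A :: "'a::field mat"
  assumes carrier: "A \<in> carrier_mat n n" "B \<in> carrier_mat n n" "P \<in> carrier_mat n n" "Q \<in> carrier_mat n n"
    and PQ: "P * Q = 1\<^sub>m n" and AP: "A * P = P * B"
  shows "similar_mat A B"
proof -
  have QP: "Q * P = 1\<^sub>m n" by (rule mat_mult_left_right_inverse[OF carrier(3,4) PQ])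
  have "A = A * (P * Q)" using carrier by (simp add: PQ)
  also have "\<dots> = A * P * Q" using carrier by (simp add: assoc_mult_mat[of A n n P n Q n])
  finally have "A = P * B * Q" by (simp add: AP)
  then show ?thesis
    unfolding similar_mat_def using similar_mat_witI[OF PQ QP _ carrier] by blast
qed

lemma diagonalizable_mat_single_eigenvalue:
  fixes A :: "'a::field mat"
  assumes "diagonalizable_mat A" and cA: "char_poly A = [:- a, 1:] ^ n" and A: "A \<in> carrier_mat n n"
  shows "A = a \<cdot>\<^sub>m 1\<^sub>m n"
proof -
  obtain D where sim: "similar_mat A D" and diag: "diagonal_mat D"
    using assms(1) unfolding diagonalizable_mat_def by auto
  obtain m P Q where carrier: "{A, D, P, Q} \<subseteq> carrier_mat m m"
    and PQ: "P * Q = 1\<^sub>m m" and APDQ: "A = P * D * Q"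
    using similar_matD[OF sim] by blast
  have m: "m = n" using carrier A by auto
  then have D: "D \<in> carrier_mat n n" and P: "P \<in> carrier_mat n n" and Q: "Q \<in> carrier_mat n n"
    using carrier by auto
  have cD: "char_poly D = [:- a, 1:] ^ n"
    using char_poly_similar[OF sim] cA by simp
  have "D $$ (i, i) = a" if i: "i < n" for i
  proof -
    have "upper_triangular D" using diag D unfolding diagonal_mat_def upper_triangular_def by auto
    then have "char_poly D = (\<Prod>d\<leftarrow>diag_mat D. [:- d, 1:])"
      by (rule char_poly_upper_triangular[OF D])
    moreover have "D $$ (i, i) \<in> set (diag_mat D)" using i D by (auto simp: diag_mat_def)
    ultimately have "poly (char_poly D) (D $$ (i, i)) = 0"
      by (auto simp: poly_prod_list prod_list_zero_iff)
    then have "(D $$ (i, i) - a) ^ n = 0"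
      unfolding cD poly_power by simp
    then show ?thesis by simp
  qed
  then have D_scalar: "D = a \<cdot>\<^sub>m 1\<^sub>m n"
    using D diag by (intro eq_matI) (auto simp: diagonal_mat_def)
  have "P * (a \<cdot>\<^sub>m 1\<^sub>m n) * Q = a \<cdot>\<^sub>m (P * Q)"
    using P Q by (simp add: mult_smult_distrib[OF P one_carrier_mat] mult_smult_assoc_mat)
  then show ?thesis
    unfolding APDQ D_scalar PQ m .
qed

lemma jordan_matrix_single: "jordan_matrix [(n, a)] = jordan_block n a"
  by (rule eq_matI) (auto simp: jordan_matrix_Cons jordan_matrix_def)

text \<open>Products of concrete matrices, in a form the simplifier can evaluate.\<close>
definition mult_rows_list :: "nat \<Rightarrow> 'a::semiring_0 list list \<Rightarrow> 'a list list \<Rightarrow> 'a list list" where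
  "mult_rows_list n xs ys = map (\<lambda>r. map (\<lambda>j. \<Sum>k\<leftarrow>[0..<length ys]. r ! k * ys ! k ! j) [0..<n]) xs"

lemma mult_mat_of_rows_list:
  assumes "length ys = m" and "\<forall>r\<in>set xs. length r = m" and "\<forall>r\<in>set ys. length r = n"
  shows "mat_of_rows_list m xs * mat_of_rows_list n ys = mat_of_rows_list n (mult_rows_list n xs ys)"
  unfolding mat_of_rows_list_def mult_rows_list_def using assms
  by (intro eq_matI) (auto simp: scalar_prod_def interv_sum_list_conv_sum_set_nat atLeast0LessThan intro!: sum.cong)

lemma jordan_block_rows_list:
  "jordan_block n a = mat_of_rows_list n (map (\<lambda>i. map (\<lambda>j. if i = j then a else if Suc i = j then 1 else 0) [0..<n]) [0..<n])"
  unfolding jordan_block_def mat_of_rows_list_def by (intro eq_matI) auto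

lemma one_mat_rows_list:
  "1\<^sub>m n = mat_of_rows_list n (map (\<lambda>i. map (\<lambda>j. if i = j then 1 else 0) [0..<n]) [0..<n])"
  unfolding mat_of_rows_list_def by (intro eq_matI) auto

lemma of_real_sqrt_mult_self: "0 \<le> a \<Longrightarrow> (of_real (sqrt a) :: 'a::real_algebra_1) * of_real (sqrt a) = of_real a"
  by (simp flip: of_real_mult)

lemma real_sqrt_mult_self_assoc: "0 \<le> a \<Longrightarrow> sqrt a * (sqrt a * x) = a * (x::real)"
  by (simp flip: mult.assoc)

text \<open>
  The restrictions of \<open>H7 g\<close> to the even and to the odd basis vectors; they live in any real
  field so as to serve both over \<open>\<real>\<close> (Jordan form) and over \<open>\<complex>\<close> (eigenvalues).
\<close>
definition even_block :: "real \<Rightarrow> 'a::real_field mat" where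
  "even_block g = mat_of_rows_list 4
     [[1, of_real (sqrt 3 * g), 0, 0],
      [- of_real (sqrt 3 * g), 5, of_real (2 * g), 0],
      [0, - of_real (2 * g), 9, of_real (sqrt 3 * g)],
      [0, 0, - of_real (sqrt 3 * g), 13]]"

definition odd_block :: "real \<Rightarrow> 'a::real_field mat" where
  "odd_block g = mat_of_rows_list 3
     [[3, of_real (sqrt 2 * g), 0],
      [- of_real (sqrt 2 * g), 7, of_real (sqrt 2 * g)],
      [0, - of_real (sqrt 2 * g), 11]]"

lemma even_block_carrier: "even_block g \<in> carrier_mat 4 4"
  unfolding even_block_def mat_of_rows_list_def carrier_mat_def by (simp only: dim_row_mat dim_col_mat list.size) simp

lemma odd_block_carrier: "odd_block g \<in> carrier_mat 3 3"
  unfolding odd_block_def mat_of_rows_list_def carrier_mat_def by (simp only: dim_row_mat dim_col_mat list.size) simp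

lemma H7_similar_four_block_mat:
  "similar_mat (map_mat of_real (H7 g) :: 'a::real_field mat)
     (four_block_mat (even_block g) (0\<^sub>m 4 3) (0\<^sub>m 3 4) (odd_block g))"
proof (rule similar_mat_reindex[where n = 7 and p = "\<lambda>i. if even i then i div 2 else 4 + i div 2"])
  show "inj_on (\<lambda>i::nat. if even i then i div 2 else 4 + i div 2) {..<7}"
    by (auto simp: inj_on_def) (metis odd_two_times_div_two_succ)
  show "(if even i then i div 2 else 4 + i div 2) < 7" if "i < 7" for i :: nat
    using that by presburger
  fix i j :: nat assume "i < 7" and "j < 7"
  then have "i \<in> {0, 1, 2, 3, 4, 5, 6}" "j \<in> {0, 1, 2, 3, 4, 5, 6}" by auto
  then show "map_mat of_real (H7 g) $$ (i, j) =
    four_block_mat (even_block g) (0\<^sub>m 4 3) (0\<^sub>m 3 4) (odd_block g) $$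
      (if even i then i div 2 else 4 + i div 2, if even j then j div 2 else 4 + j div 2)"
    using even_block_carrier[of g] odd_block_carrier[of g]
    by (elim insertE emptyE) (simp_all add: H7_def Hsup_def even_block_def odd_block_def mat_of_rows_list_def)
qed (use four_block_carrier_mat[OF even_block_carrier[of g] odd_block_carrier[of g]] in \<open>auto simp: H7_def\<close>)

lemma poly_char_poly_even_block:
  "poly (char_poly (even_block g :: 'a::real_field mat)) x
     = ((x - 7)^2 - 9 * of_real (4 - g^2)) * ((x - 7)^2 - of_real (4 - g^2))"
proof -
  have "poly (char_poly (even_block g :: 'a mat)) x =
    (x - 1) * ((x - 5) * ((x - 9) * (x - 13) + of_real (sqrt 3 * g) * of_real (sqrt 3 * g))
      + of_real (2 * g) * of_real (2 * g) * (x - 13))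
    + of_real (sqrt 3 * g) * of_real (sqrt 3 * g) * ((x - 9) * (x - 13) + of_real (sqrt 3 * g) * of_real (sqrt 3 * g))"
    by (simp add: even_block_def mat_of_rows_list_def poly_char_poly_mat numeral_eq_Suc det_mat_Suc algebra_simps)
  also have "\<dots> = ((x - 7)^2 - 9 * of_real (4 - g^2)) * ((x - 7)^2 - of_real (4 - g^2))"
    by (simp add: of_real_mult of_real_diff of_real_sqrt_mult_self algebra_simps power2_eq_square)
  finally show ?thesis .
qed

lemma poly_char_poly_odd_block:
  "poly (char_poly (odd_block g :: 'a::real_field mat)) x = (x - 7) * ((x - 7)^2 - 4 * of_real (4 - g^2))"
proof -
  have "poly (char_poly (odd_block g :: 'a mat)) x =
    (x - 3) * ((x - 7) * (x - 11) + of_real (sqrt 2 * g) * of_real (sqrt 2 * g))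
    + of_real (sqrt 2 * g) * of_real (sqrt 2 * g) * (x - 11)"
    by (simp add: odd_block_def mat_of_rows_list_def poly_char_poly_mat numeral_eq_Suc det_mat_Suc algebra_simps)
  also have "\<dots> = (x - 7) * ((x - 7)^2 - 4 * of_real (4 - g^2))"
    by (simp add: of_real_mult of_real_diff of_real_sqrt_mult_self algebra_simps power2_eq_square)
  finally show ?thesis .
qed

lemma prod_sub_int_mult_3:
  "(\<Prod>m\<in>{-3..3::int}. y - of_int m * s) = (y^2 - 9 * s^2) * (y^2 - s^2) * (y * (y^2 - 4 * s^2 :: 'a::comm_ring_1))"
proof -
  have "{-3..3::int} = {-3, -2, -1, 0, 1, 2, 3}" by auto
  then show ?thesis by (simp add: algebra_simps power2_eq_square)
qed

lemma char_poly_H7: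
  "char_poly (map_mat complex_of_real (H7 g)) = (\<Prod>m\<in>{-3..3::int}. [:- Eig g m, 1:])"
proof (rule poly_eq_poly_eq_iff[THEN iffD1], rule ext)
  fix x
  define s where "s = csqrt (complex_of_real (4 - g^2))"
  have s2: "complex_of_real (4 - g^2) = s^2" by (simp add: s_def)
  have "poly (char_poly (map_mat complex_of_real (H7 g))) x
      = poly (char_poly (even_block g) * char_poly (odd_block g)) x"
    by (simp only: char_poly_similar[OF H7_similar_four_block_mat]
        char_poly_four_block_mat_0_0[OF even_block_carrier odd_block_carrier])
  also have "\<dots> = ((x - 7)^2 - 9 * s^2) * ((x - 7)^2 - s^2) * ((x - 7) * ((x - 7)^2 - 4 * s^2))"
    unfolding poly_mult poly_char_poly_even_block poly_char_poly_odd_block s2 by (rule refl)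
  also have "\<dots> = (\<Prod>m\<in>{-3..3::int}. (x - 7) - of_int m * s)"
    by (rule prod_sub_int_mult_3[symmetric])
  also have "\<dots> = poly (\<Prod>m\<in>{-3..3::int}. [:- Eig g m, 1:]) x"
    unfolding poly_prod by (rule prod.cong) (simp_all add: Eig_def s_def)
  finally show "poly (char_poly (map_mat complex_of_real (H7 g))) x = poly (\<Prod>m\<in>{-3..3::int}. [:- Eig g m, 1:]) x" .
qed

lemma eigenvalues_H7_real_distinct:
  assumes "0 \<le> g" and "g < 2"
  shows "(\<forall>e. eigenvalue (map_mat complex_of_real (H7 g)) e \<longrightarrow> e \<in> \<real>)
    \<and> card {e. eigenvalue (map_mat complex_of_real (H7 g)) e} = 7"
proof -
  define r where "r = sqrt (4 - g^2)"
  have "g^2 < 4" using assms power_strict_mono[of g 2 2] by simp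
  then have r: "r > 0" and Eig: "Eig g m = complex_of_real (7 + of_int m * r)" for m
    by (simp_all add: r_def Eig_def)
  have carrier: "map_mat complex_of_real (H7 g) \<in> carrier_mat 7 7" by (simp add: H7_def)
  have eigenvalues: "{e. eigenvalue (map_mat complex_of_real (H7 g)) e} = Eig g ` {-3..3}"
    unfolding eigenvalue_root_char_poly[OF carrier] char_poly_H7 poly_prod by (auto simp: prod_zero_iff)
  have inj: "inj_on (Eig g) {-3..3}"
    unfolding inj_on_def Eig using r by auto
  show ?thesis
  proof (intro conjI allI impI)
    fix e assume "eigenvalue (map_mat complex_of_real (H7 g)) e"
    then obtain m where "e = Eig g m" using eigenvalues by auto
    then show "e \<in> \<real>" by (simp add: Eig)
  next
    show "card {e. eigenvalue (map_mat complex_of_real (H7 g)) e} = 7"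
      unfolding eigenvalues card_image[OF inj] by simp
  qed
qed

text \<open>
  In both witnesses below the columns of \<open>P\<close> are, in reverse order, the Jordan chain
  \<open>e\<^sub>0, (A - 7) e\<^sub>0, (A - 7)\<^sup>2 e\<^sub>0, \<dots>\<close> of the first unit vector, and \<open>Q = P\<^sup>-\<^sup>1\<close>.
\<close>
lemma even_block_2_similar_jordan_block: "similar_mat (even_block 2 :: real mat) (jordan_block 4 7)"
proof (rule similar_mat_intertwining)
  define P :: "real list list" where "P =
    [[-48, 24, -6, 1], [-48 * sqrt 3, 16 * sqrt 3, -2 * sqrt 3, 0], [-48 * sqrt 3, 8 * sqrt 3, 0, 0], [-48, 0, 0, 0]]"
  define Q :: "real list list" where "Q =
    [[0, 0, 0, -1/48], [0, 0, sqrt 3 / 24, -1/8], [0, - sqrt 3 / 6, sqrt 3 / 3, -1/2], [1, - sqrt 3, sqrt 3, -1]]"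
  show "mat_of_rows_list 4 P * mat_of_rows_list 4 Q = 1\<^sub>m 4"
    unfolding one_mat_rows_list
    by (simp add: mult_mat_of_rows_list P_def Q_def mult_rows_list_def upt_rec algebra_simps real_sqrt_mult_self_assoc)
  show "even_block 2 * mat_of_rows_list 4 P = mat_of_rows_list 4 P * jordan_block 4 7"
    unfolding even_block_def jordan_block_rows_list
    by (simp add: mult_mat_of_rows_list P_def mult_rows_list_def upt_rec algebra_simps real_sqrt_mult_self_assoc)
qed (auto simp: even_block_def mat_of_rows_list_def)

lemma odd_block_2_similar_jordan_block: "similar_mat (odd_block 2 :: real mat) (jordan_block 3 7)"
proof (rule similar_mat_intertwining)
  define P :: "real list list" where "P = [[8, -4, 1], [8 * sqrt 2, -2 * sqrt 2, 0], [8, 0, 0]]"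
  define Q :: "real list list" where "Q = [[0, 0, 1/8], [0, - sqrt 2 / 4, 1/2], [1, - sqrt 2, 1]]"
  show "mat_of_rows_list 3 P * mat_of_rows_list 3 Q = 1\<^sub>m 3"
    unfolding one_mat_rows_list
    by (simp add: mult_mat_of_rows_list P_def Q_def mult_rows_list_def upt_rec algebra_simps real_sqrt_mult_self_assoc)
  show "odd_block 2 * mat_of_rows_list 3 P = mat_of_rows_list 3 P * jordan_block 3 7"
    unfolding odd_block_def jordan_block_rows_list
    by (simp add: mult_mat_of_rows_list P_def mult_rows_list_def upt_rec algebra_simps real_sqrt_mult_self_assoc)
qed (auto simp: odd_block_def mat_of_rows_list_def)

lemma jordan_nf_H7_2: "jordan_nf (H7 2) [(4, 7), (3, 7)]"
proof -
  have "map_mat of_real (H7 2) = H7 2"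
    by (rule eq_matI) auto
  then have "similar_mat (H7 2) (four_block_mat (even_block 2) (0\<^sub>m 4 3) (0\<^sub>m 3 4) (odd_block 2))"
    using H7_similar_four_block_mat[where 'a = real, of 2] by simp
  moreover have "similar_mat (four_block_mat (even_block 2) (0\<^sub>m 4 3) (0\<^sub>m 3 4) (odd_block 2))
      (four_block_mat (jordan_block 4 7) (0\<^sub>m 4 3) (0\<^sub>m 3 4) (jordan_block 3 (7::real)))"
    by (rule similar_mat_four_block_0_0[OF even_block_2_similar_jordan_block odd_block_2_similar_jordan_block
          even_block_carrier odd_block_carrier])
  moreover have "four_block_mat (jordan_block 4 7) (0\<^sub>m 4 3) (0\<^sub>m 3 4) (jordan_block 3 7) = jordan_matrix [(4, 7), (3, 7::real)]"
    by (simp add: jordan_matrix_Cons[of 4] jordan_matrix_single)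
  ultimately show ?thesis
    unfolding jordan_nf_def using similar_mat_trans by fastforce
qed

lemma H7_2_not_diagonalizable: "\<not> diagonalizable_mat (H7 2)"
proof
  assume "diagonalizable_mat (H7 2)"
  moreover have "char_poly (H7 2) = [:- 7, 1:] ^ 7"
    by (simp add: jordan_nf_char_poly[OF jordan_nf_H7_2] flip: power_add)
  ultimately have "H7 2 = 7 \<cdot>\<^sub>m 1\<^sub>m 7"
    by (rule diagonalizable_mat_single_eigenvalue) (simp add: H7_def)
  then have "H7 2 $$ (0, 2) = 0" by simp
  then show False by (simp add: H7_def Hsup_def)
qed

theorem mainTheorem3:
  shows "(\<forall>g::real. char_poly (map_mat complex_of_real (H7 g))
            = (\<Prod>m\<in>{-3..3::int}. [:- Eig g m, 1:]))
    \<and> (\<forall>g::real. 0 \<le> g \<and> g < 2 \<longrightarrow>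
            (\<forall>e. eigenvalue (map_mat complex_of_real (H7 g)) e \<longrightarrow> e \<in> \<real>)
          \<and> card {e. eigenvalue (map_mat complex_of_real (H7 g)) e} = 7)
    \<and> (\<forall>m\<in>{-3..3::int}. Eig 2 m = 7)
    \<and> \<not> diagonalizable_mat (H7 2)
    \<and> jordan_nf (H7 2) [(4, 7), (3, 7)]
    \<and> dim_gen_eigenspace (H7 2) 7 1 = 2"
proof (intro conjI)
  show "\<forall>g. char_poly (map_mat complex_of_real (H7 g)) = (\<Prod>m\<in>{-3..3::int}. [:- Eig g m, 1:])"
    using char_poly_H7 by blast
  show "\<forall>g::real. 0 \<le> g \<and> g < 2 \<longrightarrow>
      (\<forall>e. eigenvalue (map_mat complex_of_real (H7 g)) e \<longrightarrow> e \<in> \<real>)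
      \<and> card {e. eigenvalue (map_mat complex_of_real (H7 g)) e} = 7"
    using eigenvalues_H7_real_distinct by blast
  show "\<forall>m\<in>{-3..3::int}. Eig 2 m = 7"
    by (simp add: Eig_def)
  show "dim_gen_eigenspace (H7 2) 7 1 = 2"
    using dim_gen_eigenspace[OF jordan_nf_H7_2, of 7 1] by simp
qed (fact H7_2_not_diagonalizable jordan_nf_H7_2)+

end
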